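(* Let $\mathcal{D}=(\mathcal{V},\mathcal{E})$ be a simple digraph with $\mathcal{V}=\{1,\ldots,n\}$, $n\ge 2$, and let $L$ be its Laplacian matrix. Then $r_{\max}(\mathcal{D})$ equals the optimal value of the mixed integer linear program $$\min_{t,\,b}\ t \quad\text{subject to}\quad t\in\mathbb{R},\ b\in\mathbb{Z}^{2n},\ 0\le t,\ \begin{bmatrix}L&0\\0&L\end{bmatrix} b\le t\begin{bmatrix}\mathbf 1_n\\ \mathbf 1_n\end{bmatrix},\ 0\le b\le \mathbf 1_{2n},\ \begin{bmatrix}I_n & I_n\end{bmatrix} b\le \mathbf 1_n,$$ $$1\le \begin{bmatrix}\mathbf 1_n^T & 0\end{bmatrix} b\le n-1,\qquad 1\le \begin{bmatrix}0 & \mathbf 1_n^T\end{bmatrix} b\le n-1,$$ where all vector inequalities are componentwise and $I_n$ is the $n\times n$ identity.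
   Context: A simple digraph has no self-loops and at most one directed edge $(i,j)$ from $i$ to $j$. For $j\in\mathcal{V}$, $\mathcal{N}_j=\{i\in\mathcal{V}:(i,j)\in\mathcal{E}\}$ is the set of in-neighbors of $j$. The Laplacian $L\in\mathbb{R}^{n\times n}$ has entries $L_{j,j}=|\mathcal{N}_j|$, $L_{j,i}=-1$ if $i\neq j$ and $i\in\mathcal{N}_j$, and $L_{j,i}=0$ if $i\ne j$ and $i\notin\mathcal{N}_j$. For $r\in\mathbb{Z}_{\ge 0}$, a nonempty subset $S\subseteq\mathcal{V}$ is $r$-reachable if there exists $i\in S$ with $|\mathcal{N}_i\setminus S|\ge r$. A digraph on $n\ge 2$ nodes is $r$-robust if for every pair of nonempty, disjoint subsets of $\mathcal{V}$, at least one of them is $r$-reachable. $r_{\max}(\mathcal{D})$ denotes the largest integer $r\ge 0$ for which $\mathcal{D}$ is $r$-robust. $\mathbf 1_m$ is the all-ones vector of length $m$ and $0$ denotes zero blocks of appropriate size. *)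

theory Defs
  imports Complex_Main
begin

definition simple_digraph :: "nat \<Rightarrow> (nat \<times> nat) set \<Rightarrow> bool" where
  "simple_digraph n E \<longleftrightarrow> E \<subseteq> {1..n} \<times> {1..n} \<and> (\<forall>i. (i, i) \<notin> E)"

definition in_nbrs :: "nat \<Rightarrow> (nat \<times> nat) set \<Rightarrow> nat \<Rightarrow> nat set" where
  "in_nbrs n E j = {i \<in> {1..n}. (i, j) \<in> E}"

definition laplacian :: "nat \<Rightarrow> (nat \<times> nat) set \<Rightarrow> nat \<Rightarrow> nat \<Rightarrow> real" where
  "laplacian n E j i =
     (if i = j then real (card (in_nbrs n E j))
      else if i \<in> in_nbrs n E j then -1 else 0)"

definition r_reachable :: "nat \<Rightarrow> (nat \<times> nat) set \<Rightarrow> nat \<Rightarrow> nat set \<Rightarrow> bool" where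
  "r_reachable n E r S \<longleftrightarrow> (\<exists>i\<in>S. card (in_nbrs n E i - S) \<ge> r)"

definition r_robust :: "nat \<Rightarrow> (nat \<times> nat) set \<Rightarrow> nat \<Rightarrow> bool" where
  "r_robust n E r \<longleftrightarrow>
     (\<forall>S1 S2. S1 \<subseteq> {1..n} \<longrightarrow> S2 \<subseteq> {1..n} \<longrightarrow> S1 \<noteq> {} \<longrightarrow> S2 \<noteq> {} \<longrightarrow>
        S1 \<inter> S2 = {} \<longrightarrow> r_reachable n E r S1 \<or> r_reachable n E r S2)"

definition r_max :: "nat \<Rightarrow> (nat \<times> nat) set \<Rightarrow> nat" where
  "r_max n E = (GREATEST r. r_robust n E r)"

text \<open>Feasibility for the MILP; b \<in> \<int>^{2n} is indexed by 1..2n (entries outside are irrelevant).\<close>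
definition milp_feasible :: "nat \<Rightarrow> (nat \<times> nat) set \<Rightarrow> real \<Rightarrow> (nat \<Rightarrow> int) \<Rightarrow> bool" where
  "milp_feasible n E t b \<longleftrightarrow>
     0 \<le> t \<and>
     (\<forall>j\<in>{1..n}. (\<Sum>i=1..n. laplacian n E j i * real_of_int (b i)) \<le> t) \<and>
     (\<forall>j\<in>{1..n}. (\<Sum>i=1..n. laplacian n E j i * real_of_int (b (n + i))) \<le> t) \<and>
     (\<forall>k\<in>{1..2*n}. 0 \<le> b k \<and> b k \<le> 1) \<and>
     (\<forall>j\<in>{1..n}. b j + b (n + j) \<le> 1) \<and>
     1 \<le> (\<Sum>i=1..n. b i) \<and> (\<Sum>i=1..n. b i) \<le> int n - 1 \<and>
     1 \<le> (\<Sum>i=1..n. b (n + i)) \<and> (\<Sum>i=1..n. b (n + i)) \<le> int n - 1"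

end

theory Submission
  imports Defs
begin

text \<open>A feasible point of the program is the pair of indicator vectors of two nonempty disjoint
  vertex sets \<open>S\<^sub>1, S\<^sub>2\<close>, and the Laplacian rows of an indicator vector count, for a vertex of the
  set, its in-neighbours outside the set (and are \<open>\<le> 0\<close> off the set). So the program minimises,
  over all such pairs, the larger of the two maximal outside in-degrees; this equals \<open>r\<^sub>m\<^sub>a\<^sub>x\<close>
  because the sets witnessing that the digraph is not \<open>(r\<^sub>m\<^sub>a\<^sub>x + 1)\<close>-robust give a feasible point
  of value \<open>r\<^sub>m\<^sub>a\<^sub>x\<close>, while \<open>r\<^sub>m\<^sub>a\<^sub>x\<close>-robustness forces every feasible value up to \<open>r\<^sub>m\<^sub>a\<^sub>x\<close>.\<close>

lemma finite_in_nbrs: "finite (in_nbrs n E j)"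
  unfolding in_nbrs_def by simp

lemma laplacian_indicator_sum:
  assumes "irrefl E" and S: "S \<subseteq> {1..n}"
  shows "(\<Sum>i=1..n. laplacian n E j i * of_bool (i \<in> S)) =
    (if j \<in> S then real (card (in_nbrs n E j - S)) else - real (card (in_nbrs n E j \<inter> S)))"
proof -
  let ?N = "in_nbrs n E j"
  have "j \<notin> ?N" using \<open>irrefl E\<close> by (simp add: in_nbrs_def irrefl_def)
  have "finite S" using S finite_subset by blast
  have off_diagonal: "(\<Sum>i\<in>S - {j}. laplacian n E j i) = - real (card (?N \<inter> S))"
  proof -
    have "(\<Sum>i\<in>S - {j}. laplacian n E j i) = (\<Sum>i\<in>S - {j}. - of_bool (i \<in> ?N))"
      by (rule sum.cong) (auto simp: laplacian_def)
    also have "\<dots> = - real (card ((S - {j}) \<inter> ?N))"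
      using \<open>finite S\<close> by (simp add: sum_negf)
    also have "(S - {j}) \<inter> ?N = ?N \<inter> S" using \<open>j \<notin> ?N\<close> by auto
    finally show ?thesis .
  qed
  have "(\<Sum>i=1..n. laplacian n E j i * of_bool (i \<in> S)) = (\<Sum>i\<in>S. laplacian n E j i)"
    using S by (simp add: Int_absorb1 Int_absorb2)
  also have "\<dots> = (if j \<in> S then real (card ?N) else 0) + (\<Sum>i\<in>S - {j}. laplacian n E j i)"
    using \<open>finite S\<close> by (cases "j \<in> S") (simp_all add: sum.remove laplacian_def)
  also have "real (card ?N) = real (card (?N - S)) + real (card (?N \<inter> S))"
    using card_Int_Diff[OF finite_in_nbrs, of n E j S] by simp
  finally show ?thesis using off_diagonal by simp
qed

lemma sum_indicator_eq_card:
  fixes S :: "nat set"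
  assumes "S \<subseteq> {1..n}" and c: "\<And>i. i \<in> {1..n} \<Longrightarrow> c i = of_bool (i \<in> S)"
  shows "(\<Sum>i=1..n. c i) = int (card S)"
proof -
  have "(\<Sum>i=1..n. c i) = (\<Sum>i=1..n. of_bool (i \<in> S))"
    by (rule sum.cong) (simp_all add: c)
  also have "\<dots> = int (card S)"
    using assms(1) by (simp add: Int_absorb1 Int_absorb2)
  finally show ?thesis .
qed

lemma laplacian_indicator_le_iff:
  assumes "irrefl E" and S: "S \<subseteq> {1..n}" and "0 \<le> t"
    and c: "\<And>i. i \<in> {1..n} \<Longrightarrow> c i = of_bool (i \<in> S)"
  shows "(\<forall>j\<in>{1..n}. (\<Sum>i=1..n. laplacian n E j i * real_of_int (c i)) \<le> t) \<longleftrightarrow>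
    (\<forall>j\<in>S. real (card (in_nbrs n E j - S)) \<le> t)"
proof -
  have "(\<Sum>i=1..n. laplacian n E j i * real_of_int (c i)) =
      (\<Sum>i=1..n. laplacian n E j i * of_bool (i \<in> S))" for j
    by (rule sum.cong) (simp_all add: c)
  then show ?thesis
    using S \<open>0 \<le> t\<close> laplacian_indicator_sum[OF \<open>irrefl E\<close> S]
    by (auto 0 3 intro: order.trans[of _ 0])
qed

lemma r_robust_le:
  assumes "2 \<le> n" and "r_robust n E r"
  shows "r \<le> n"
proof -
  have "r_reachable n E r {1} \<or> r_reachable n E r {2}"
    using assms unfolding r_robust_def by auto
  then obtain i S where "r \<le> card (in_nbrs n E i - S)"
    unfolding r_reachable_def by blast
  also have "\<dots> \<le> card {1..n}"
    by (rule card_mono) (auto simp: in_nbrs_def)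
  finally show ?thesis by simp
qed

lemma r_robust_r_max:
  assumes "2 \<le> n"
  shows "r_robust n E (r_max n E)"
  unfolding r_max_def
  by (rule GreatestI_nat[of _ 0 n]) (auto simp: r_robust_def r_reachable_def intro: r_robust_le[OF assms])

lemma not_r_robust_Suc_r_max:
  assumes "2 \<le> n"
  shows "\<not> r_robust n E (Suc (r_max n E))"
  using Greatest_le_nat[of "r_robust n E" _ n] r_robust_le[OF assms]
  unfolding r_max_def by fastforce

lemma not_r_reachable_Suc_iff:
  "\<not> r_reachable n E (Suc r) S \<longleftrightarrow> (\<forall>j\<in>S. real (card (in_nbrs n E j - S)) \<le> real r)"
  by (auto simp: r_reachable_def not_less_eq_eq)

definition pair_indicator :: "nat \<Rightarrow> nat set \<Rightarrow> nat set \<Rightarrow> nat \<Rightarrow> int" where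
  "pair_indicator n S\<^sub>1 S\<^sub>2 k = (if k \<le> n then of_bool (k \<in> S\<^sub>1) else of_bool (k - n \<in> S\<^sub>2))"

lemma milp_feasible_pair_indicator:
  assumes "irrefl E" and "0 \<le> t"
    and sub: "S\<^sub>1 \<subseteq> {1..n}" "S\<^sub>2 \<subseteq> {1..n}" and nonempty: "S\<^sub>1 \<noteq> {}" "S\<^sub>2 \<noteq> {}"
    and disjoint: "S\<^sub>1 \<inter> S\<^sub>2 = {}"
    and bounded: "\<forall>j\<in>S\<^sub>1. real (card (in_nbrs n E j - S\<^sub>1)) \<le> t"
      "\<forall>j\<in>S\<^sub>2. real (card (in_nbrs n E j - S\<^sub>2)) \<le> t"
  shows "milp_feasible n E t (pair_indicator n S\<^sub>1 S\<^sub>2)"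
proof -
  let ?b = "pair_indicator n S\<^sub>1 S\<^sub>2"
  have low: "?b i = of_bool (i \<in> S\<^sub>1)" if "i \<in> {1..n}" for i
    using that by (simp add: pair_indicator_def)
  have high: "?b (n + i) = of_bool (i \<in> S\<^sub>2)" if "i \<in> {1..n}" for i
    using that sub(1) by (auto simp: pair_indicator_def)
  have "card (S\<^sub>1 \<union> S\<^sub>2) \<le> card {1..n}"
    using sub by (intro card_mono) auto
  then have "card S\<^sub>1 + card S\<^sub>2 \<le> n"
    using disjoint sub by (simp add: card_Un_disjoint finite_subset)
  moreover have "card S\<^sub>1 \<ge> 1" "card S\<^sub>2 \<ge> 1"
    using sub nonempty by (auto simp: Suc_le_eq card_gt_0_iff finite_subset)
  moreover have "?b j + ?b (n + j) \<le> 1" if "j \<in> {1..n}" for j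
    using that disjoint by (auto simp: pair_indicator_def)
  moreover have "0 \<le> ?b k \<and> ?b k \<le> 1" for k
    by (simp add: pair_indicator_def)
  ultimately show ?thesis
    using \<open>0 \<le> t\<close> bounded
      laplacian_indicator_le_iff[OF \<open>irrefl E\<close> sub(1) \<open>0 \<le> t\<close> low]
      laplacian_indicator_le_iff[OF \<open>irrefl E\<close> sub(2) \<open>0 \<le> t\<close>, of "\<lambda>i. ?b (n + i)", OF high]
      sum_indicator_eq_card[OF sub(1) low]
      sum_indicator_eq_card[OF sub(2), of "\<lambda>i. ?b (n + i)", OF high]
    unfolding milp_feasible_def by simp
qed

lemma milp_feasibleE:
  assumes "irrefl E" and feasible: "milp_feasible n E t b"
  obtains S\<^sub>1 S\<^sub>2 where "S\<^sub>1 \<subseteq> {1..n}" "S\<^sub>2 \<subseteq> {1..n}" "S\<^sub>1 \<noteq> {}" "S\<^sub>2 \<noteq> {}" "S\<^sub>1 \<inter> S\<^sub>2 = {}"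
    "\<forall>j\<in>S\<^sub>1. real (card (in_nbrs n E j - S\<^sub>1)) \<le> t" "\<forall>j\<in>S\<^sub>2. real (card (in_nbrs n E j - S\<^sub>2)) \<le> t"
proof -
  define S\<^sub>1 where "S\<^sub>1 = {i \<in> {1..n}. b i = 1}"
  define S\<^sub>2 where "S\<^sub>2 = {i \<in> {1..n}. b (n + i) = 1}"
  have sub: "S\<^sub>1 \<subseteq> {1..n}" "S\<^sub>2 \<subseteq> {1..n}"
    by (auto simp: S\<^sub>1_def S\<^sub>2_def)
  have binary: "0 \<le> b k \<and> b k \<le> 1" if "k \<in> {1..2*n}" for k
    using feasible that unfolding milp_feasible_def by blast
  have low: "b i = of_bool (i \<in> S\<^sub>1)" if "i \<in> {1..n}" for i
    using that binary[of i] by (auto simp: S\<^sub>1_def)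
  have high: "b (n + i) = of_bool (i \<in> S\<^sub>2)" if "i \<in> {1..n}" for i
    using that binary[of "n + i"] by (auto simp: S\<^sub>2_def)
  have "0 \<le> t"
    using feasible unfolding milp_feasible_def by blast
  show thesis
  proof
    show "S\<^sub>1 \<noteq> {}" "S\<^sub>2 \<noteq> {}"
      using feasible sum_indicator_eq_card[OF sub(1) low]
        sum_indicator_eq_card[OF sub(2), of "\<lambda>i. b (n + i)", OF high]
      unfolding milp_feasible_def by auto
    show "\<forall>j\<in>S\<^sub>1. real (card (in_nbrs n E j - S\<^sub>1)) \<le> t"
      using feasible laplacian_indicator_le_iff[OF \<open>irrefl E\<close> sub(1) \<open>0 \<le> t\<close> low]
      unfolding milp_feasible_def by blast
    show "\<forall>j\<in>S\<^sub>2. real (card (in_nbrs n E j - S\<^sub>2)) \<le> t"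
      using feasible
        laplacian_indicator_le_iff[OF \<open>irrefl E\<close> sub(2) \<open>0 \<le> t\<close>, of "\<lambda>i. b (n + i)", OF high]
      unfolding milp_feasible_def by blast
    show "S\<^sub>1 \<inter> S\<^sub>2 = {}"
      using feasible unfolding milp_feasible_def S\<^sub>1_def S\<^sub>2_def by fastforce
  qed (fact sub)+
qed

theorem corollary1:
  fixes n :: nat and E :: "(nat \<times> nat) set"
  assumes "simple_digraph n E" and "n \<ge> 2"
  shows "(\<exists>b. milp_feasible n E (real (r_max n E)) b) \<and>
         (\<forall>t b. milp_feasible n E t b \<longrightarrow> real (r_max n E) \<le> t)"
proof -
  let ?r = "r_max n E"
  have "irrefl E"
    using assms(1) by (simp add: simple_digraph_def irrefl_def)
  obtain S\<^sub>1 S\<^sub>2 where "S\<^sub>1 \<subseteq> {1..n}" "S\<^sub>2 \<subseteq> {1..n}" "S\<^sub>1 \<noteq> {}" "S\<^sub>2 \<noteq> {}" "S\<^sub>1 \<inter> S\<^sub>2 = {}"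
    and "\<not> r_reachable n E (Suc ?r) S\<^sub>1" "\<not> r_reachable n E (Suc ?r) S\<^sub>2"
    using not_r_robust_Suc_r_max[OF assms(2), of E] unfolding r_robust_def by auto
  then have "milp_feasible n E (real ?r) (pair_indicator n S\<^sub>1 S\<^sub>2)"
    by (intro milp_feasible_pair_indicator[OF \<open>irrefl E\<close>]) (simp_all add: not_r_reachable_Suc_iff)
  moreover have "real ?r \<le> t" if feasible: "milp_feasible n E t b" for t b
  proof -
    obtain S\<^sub>1 S\<^sub>2 where S: "S\<^sub>1 \<subseteq> {1..n}" "S\<^sub>2 \<subseteq> {1..n}" "S\<^sub>1 \<noteq> {}" "S\<^sub>2 \<noteq> {}" "S\<^sub>1 \<inter> S\<^sub>2 = {}"
      and bounded: "\<forall>j\<in>S\<^sub>1. real (card (in_nbrs n E j - S\<^sub>1)) \<le> t"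
        "\<forall>j\<in>S\<^sub>2. real (card (in_nbrs n E j - S\<^sub>2)) \<le> t"
      using \<open>irrefl E\<close> feasible by (rule milp_feasibleE)
    have "r_reachable n E ?r S\<^sub>1 \<or> r_reachable n E ?r S\<^sub>2"
      using r_robust_r_max[OF assms(2), of E] S unfolding r_robust_def by simp
    then obtain S j where "?r \<le> card (in_nbrs n E j - S)" "real (card (in_nbrs n E j - S)) \<le> t"
      using bounded unfolding r_reachable_def by auto
    then show ?thesis
      by linarith
  qed
  ultimately show ?thesis
    by blast
qed

end
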